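(* Let $(X_n)_{n\in\mathbb Z}$ be the fractionally integrated noise F($d$) with $d\in(0,1/2)$. For $k\ge1$ let $\widetilde{X'_k}(1)=-\sum_{j=1}^{k}a_jX_{k+1-j}$. Then there exists a constant $C>0$, depending only on $d$ and $\sigma_\varepsilon^2$, such that $$\mathbb{E}\big[(X_{k+1}-\widetilde{X'_k}(1))^2\big]=\sigma_\varepsilon^2+Ck^{-1}+o(k^{-1})\qquad(k\to\infty).$$
   Context: Fractionally integrated noise F($d$), $d\in(0,1/2)$, is the stationary solution of $X_n=(1-B)^{-d}\varepsilon_n$. Here $B$ is the backward shift and $(\varepsilon_n)_{n\in\mathbb Z}$ is a sequence of uncorrelated random variables with mean $0$ and variance $\sigma_\varepsilon^2>0$. Equivalently, $X_n=\sum_{j\ge0}b_j\varepsilon_{n-j}$ with $b_j=\frac{\Gamma(j+d)}{\Gamma(j+1)\Gamma(d)}$, and $\varepsilon_n=\sum_{j\ge0}a_jX_{n-j}$ with $a_0=1$ and $a_j=\frac{\Gamma(j-d)}{\Gamma(j+1)\Gamma(-d)}$ for $j\ge1$. Its autocovariance is $\sigma(j)=\sigma_\varepsilon^2\frac{(-1)^j\Gamma(1-2d)}{\Gamma(j-d+1)\Gamma(1-j-d)}$ for $j\ge0$. *)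

theory Defs
  imports "HOL-Probability.Probability" "HOL-Library.Landau_Symbols"
begin

definition fi_b :: "real \<Rightarrow> nat \<Rightarrow> real" where
  "fi_b d j = Gamma (real j + d) / (Gamma (real j + 1) * Gamma d)"

definition fi_a :: "real \<Rightarrow> nat \<Rightarrow> real" where
  "fi_a d j = (if j = 0 then 1 else Gamma (real j - d) / (Gamma (real j + 1) * Gamma (- d)))"

text \<open>(eps_n) is uncorrelated with mean 0 and variance s2, and X_n is the
  stationary solution of X = (1-B)^(-d) eps, i.e. the L2-limit
  X_n = sum_{j>=0} b_j eps_{n-j}.\<close>
definition fi_noise ::
  "'a measure \<Rightarrow> real \<Rightarrow> real \<Rightarrow> (int \<Rightarrow> 'a \<Rightarrow> real) \<Rightarrow> (int \<Rightarrow> 'a \<Rightarrow> real) \<Rightarrow> bool" where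
  "fi_noise M d s2 eps X \<longleftrightarrow>
     prob_space M \<and>
     (\<forall>n. eps n \<in> borel_measurable M \<and> integrable M (\<lambda>\<omega>. (eps n \<omega>)\<^sup>2) \<and>
          (\<integral>\<omega>. eps n \<omega> \<partial>M) = 0 \<and> (\<integral>\<omega>. (eps n \<omega>)\<^sup>2 \<partial>M) = s2) \<and>
     (\<forall>m n. m \<noteq> n \<longrightarrow> (\<integral>\<omega>. eps m \<omega> * eps n \<omega> \<partial>M) = 0) \<and>
     (\<forall>n. X n \<in> borel_measurable M \<and> integrable M (\<lambda>\<omega>. (X n \<omega>)\<^sup>2) \<and>
          ((\<lambda>m. \<integral>\<omega>. (X n \<omega> - (\<Sum>j<m. fi_b d j * eps (n - int j) \<omega>))\<^sup>2 \<partial>M)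
             \<longlonglongrightarrow> 0))"

definition fi_pred :: "real \<Rightarrow> (int \<Rightarrow> 'a \<Rightarrow> real) \<Rightarrow> nat \<Rightarrow> 'a \<Rightarrow> real" where
  "fi_pred d X k \<omega> = - (\<Sum>j=1..k. fi_a d j * X (int k + 1 - int j) \<omega>)"

end

theory Submission
  imports Defs "HOL-Real_Asymp.Real_Asymp"
begin

(* The prediction error e_k = X_{k+1} - X~'_k(1) = sum_{j<=k} a_j X_{k+1-j} is a
   finite linear filter of X.  Substituting the moving-average expansion
   X_n = sum_i b_i eps_{n-i} (an L2 limit) and using that the innovations are orthonormal
   up to the factor s2 gives E e_k^2 = s2 * sum_l c_{k,l}^2 with the convolution
   c_{k,l} = sum_{j <= min k l} a_j b_{l-j}.  Both a_j and b_j are Pochhammer quotients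
   (z)_n / n!, and this yields c_{k,0} = 1, c_{k,l} = 0 for 1 <= l <= k and
   c_{k,k+1+n} = A_k (n+1) b_{n+1} / (k+1+n) with A_k = (1-d)_k / k! = sum_{j<=k} a_j.
   Hence E e_k^2 = s2 (1 + A_k^2 T_k) for an explicit series T_k.  Since
   A_k ~ k^(-d) / Gamma(1-d) and m b_m ~ m^d / Gamma d, the quantity k^(1-2d) T_k is a
   Riemann sum of the integrable function x^(2d) / (1+x)^2 on (0, oo); dominated convergence
   gives k A_k^2 T_k --> Lambda > 0, and the theorem follows with C = s2 * Lambda. *)

(* The quotient (z)_n / n! of a rising factorial by a factorial: the n-th coefficient of
   (1 - x)^(-z).  For z = d, -d, 1 - d it gives b_n, a_n and the partial sums of a_n. *)
definition poch_frac :: "real \<Rightarrow> nat \<Rightarrow> real" where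
  "poch_frac z n = pochhammer z n / fact n"

lemma poch_frac_0 [simp]: "poch_frac z 0 = 1"
  by (simp add: poch_frac_def)

lemma poch_frac_Gamma:
  assumes "z \<notin> \<int>\<^sub>\<le>\<^sub>0"
  shows "poch_frac z n = Gamma (real n + z) / (Gamma (real n + 1) * Gamma z)"
proof -
  have "pochhammer z n = Gamma (z + real n) / Gamma z"
    using assms by (rule pochhammer_Gamma)
  moreover have "Gamma (real n + 1) = fact n"
    using Gamma_fact[of n] by (simp add: add.commute)
  ultimately show ?thesis
    by (simp add: poch_frac_def add.commute)
qed

lemma fi_b_poch_frac:
  assumes "0 < d"
  shows "fi_b d = poch_frac d"
proof -
  have "d \<notin> \<int>\<^sub>\<le>\<^sub>0" using assms by (auto elim!: nonpos_Ints_cases)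
  then show ?thesis by (simp add: fun_eq_iff fi_b_def poch_frac_Gamma)
qed

lemma fi_a_poch_frac:
  assumes "0 < d" "d < 1"
  shows "fi_a d = poch_frac (-d)"
proof -
  have "-d \<notin> \<int>\<^sub>\<le>\<^sub>0"
  proof
    assume "-d \<in> \<int>\<^sub>\<le>\<^sub>0"
    then obtain n where "d = real n" by (auto elim!: nonpos_Ints_cases')
    with assms show False by (cases n) auto
  qed
  then show ?thesis
    by (simp add: fun_eq_iff fi_a_def poch_frac_Gamma Gamma_eq_zero_iff)
qed

lemma poch_frac_1 [simp]: "poch_frac z (Suc 0) = z"
  by (simp add: poch_frac_def)

lemma poch_frac_Suc: "poch_frac z (Suc n) * real (Suc n) = poch_frac z n * (z + real n)"
  by (simp add: poch_frac_def pochhammer_Suc divide_simps del: of_nat_Suc)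

lemma poch_frac_Suc_shift: "poch_frac z (Suc n) * real (Suc n) = z * poch_frac (z + 1) n"
  by (simp add: poch_frac_def pochhammer_rec divide_simps del: of_nat_Suc)

(* Partial sums of the coefficients of (1 - x)^(-z) are those of (1 - x)^(-(z+1));
   for z = -d this identifies A_k = sum_{j<=k} a_j with (1-d)_k / k!. *)
lemma poch_frac_partial_sum: "(\<Sum>j\<le>k. poch_frac z j) = poch_frac (z + 1) k"
proof (induction k)
  case (Suc k)
  have "poch_frac (z + 1) (Suc k) * real (Suc k) = (poch_frac (z + 1) k + poch_frac z (Suc k)) * real (Suc k)"
    using poch_frac_Suc[of "z + 1" k] poch_frac_Suc_shift[of z k] by (simp add: algebra_simps)
  then show ?case
    using Suc.IH by (simp del: of_nat_Suc)
qed simp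

lemma poch_frac_pos: "z > 0 \<Longrightarrow> poch_frac z n > 0"
  by (simp add: poch_frac_def pochhammer_pos)

(* (z)_n / n! ~ n^(z-1) / Gamma z, read off from Euler's product for Gamma. *)
lemma poch_frac_asymp:
  assumes z: "z > 0"
  shows "(\<lambda>n. poch_frac z n * real n powr (1 - z)) \<longlonglongrightarrow> 1 / Gamma z"
proof -
  have "(\<lambda>n. inverse (Gamma_series z n) * (real n / (z + real n))) \<longlonglongrightarrow> inverse (Gamma z) * 1"
  proof (intro tendsto_intros)
    show "Gamma z \<noteq> 0" using Gamma_real_pos[OF z] by simp
    show "(\<lambda>n. real n / (z + real n)) \<longlonglongrightarrow> 1" by real_asymp
  qed
  moreover have "\<forall>\<^sub>F n in sequentially.
      inverse (Gamma_series z n) * (real n / (z + real n)) = poch_frac z n * real n powr (1 - z)"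
    using eventually_gt_at_top[of "0::nat"]
  proof eventually_elim
    case (elim n)
    have e: "exp (z * ln (real n)) = real n powr z" using elim by (simp add: powr_def)
    have q: "real n powr (1 - z) = real n / real n powr z" using elim by (simp add: powr_diff)
    have p: "pochhammer z (n + 1) = pochhammer z n * (z + real n)" by (simp add: pochhammer_Suc)
    have "z + real n \<noteq> 0" "real n powr z \<noteq> 0" using z elim by auto
    then show ?case
      unfolding Gamma_series_def poch_frac_def p q by (simp add: e divide_simps)
  qed
  ultimately show ?thesis
    by (simp add: tendsto_cong divide_inverse)
qed

(* c_{k,l}: the coefficient of eps_{k+1-l} in the prediction error e_k. *)
definition err_coef :: "real \<Rightarrow> nat \<Rightarrow> nat \<Rightarrow> real" where
  "err_coef d k l = (\<Sum>j\<le>min k l. poch_frac (-d) j * poch_frac d (l - j))"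

lemma err_coef_0: "err_coef d k 0 = 1"
  by (simp add: err_coef_def)

lemma err_coef_Suc:
  "err_coef d (Suc k) (Suc k + 1 + n) = err_coef d k (k + 1 + Suc n) + poch_frac (-d) (Suc k) * poch_frac d (n + 1)"
  by (simp add: err_coef_def Suc_diff_le)

lemma err_coef_tail:
  "err_coef d k (k + 1 + n) = poch_frac (1 - d) k * real (n + 1) * poch_frac d (n + 1) / real (k + 1 + n)"
proof (induction k arbitrary: n)
  case 0
  then show ?case by (simp add: err_coef_def)
next
  case (Suc k)
  define A where "A = poch_frac (1 - d) k"
  have b: "poch_frac d (n + 2) * real (n + 2) = poch_frac d (n + 1) * (d + real (n + 1))"
    using poch_frac_Suc[of d "n + 1"] by (simp add: add_ac)
  have a: "poch_frac (-d) (Suc k) * real (Suc k) = - d * A"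
    using poch_frac_Suc_shift[of "-d" k] by (simp add: A_def)
  have s: "poch_frac (1 - d) (Suc k) = A + poch_frac (-d) (Suc k)"
    using poch_frac_partial_sum[of "-d" "Suc k"] poch_frac_partial_sum[of "-d" k] by (simp add: A_def)
  have "err_coef d (Suc k) (Suc k + 1 + n)
      = err_coef d k (k + 1 + Suc n) + poch_frac (-d) (Suc k) * poch_frac d (n + 1)"
    by (rule err_coef_Suc)
  also have "\<dots> = A * (poch_frac d (n + 2) * real (n + 2)) / real (Suc k + 1 + n)
      + poch_frac (-d) (Suc k) * poch_frac d (n + 1)"
    using Suc.IH[of "Suc n"] by (simp add: A_def add_ac)
  also have "\<dots> = (A * (poch_frac d (n + 2) * real (n + 2))
      + poch_frac d (n + 1) * (poch_frac (-d) (Suc k) * real (Suc k) + poch_frac (-d) (Suc k) * real (n + 1)))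
      / real (Suc k + 1 + n)"
    by (simp add: field_simps)
  also have "\<dots> = poch_frac (1 - d) (Suc k) * real (n + 1) * poch_frac d (n + 1) / real (Suc k + 1 + n)"
    unfolding a b s by (simp add: algebra_simps)
  finally show ?case .
qed

(* Inside the horizon the filter inverts the moving average exactly, so c_{k,l} = 0. *)
lemma err_coef_mid:
  assumes "1 \<le> l" "l \<le> k"
  shows "err_coef d k l = 0"
proof -
  obtain l' where l: "l = Suc l'" using assms by (cases l) auto
  have split: "err_coef d k l = err_coef d l' (l' + 1 + 0) + poch_frac (-d) (Suc l')"
    unfolding err_coef_def l using assms l by (simp add: min_def)
  have tail: "err_coef d l' (l' + 1 + 0) = d * poch_frac (1 - d) l' / real (Suc l')"
    using err_coef_tail[of d l' 0] by simp
  have last: "poch_frac (-d) (Suc l') = - d * poch_frac (1 - d) l' / real (Suc l')"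
    using poch_frac_Suc_shift[of "-d" l'] by (simp add: field_simps del: of_nat_Suc)
  show ?thesis
    unfolding split tail last by simp
qed

definition L2 :: "'a measure \<Rightarrow> ('a \<Rightarrow> real) \<Rightarrow> bool" where
  "L2 M f \<longleftrightarrow> f \<in> borel_measurable M \<and> integrable M (\<lambda>x. (f x)\<^sup>2)"

lemma abs_mult_le_sum_squares: "\<bar>a * b\<bar> \<le> a\<^sup>2 + b\<^sup>2" for a b :: real
proof -
  have "2 * (\<bar>a\<bar> * \<bar>b\<bar>) \<le> a\<^sup>2 + b\<^sup>2"
    using sum_squares_bound[of "\<bar>a\<bar>" "\<bar>b\<bar>"] by simp
  moreover have "0 \<le> \<bar>a\<bar> * \<bar>b\<bar>" by simp
  ultimately show ?thesis unfolding abs_mult by linarith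
qed

lemma L2_mult_integrable:
  assumes "L2 M f" "L2 M g"
  shows "integrable M (\<lambda>x. f x * g x)"
proof (rule Bochner_Integration.integrable_bound[where f="\<lambda>x. (f x)\<^sup>2 + (g x)\<^sup>2"])
  show "AE x in M. norm (f x * g x) \<le> norm ((f x)\<^sup>2 + (g x)\<^sup>2)"
    using abs_mult_le_sum_squares by (intro AE_I2) simp
qed (use assms in \<open>auto simp: L2_def\<close>)

lemma L2_add:
  assumes "L2 M f" "L2 M g"
  shows "L2 M (\<lambda>x. f x + g x)"
proof -
  have "integrable M (\<lambda>x. (f x)\<^sup>2 + (g x)\<^sup>2 + 2 * (f x * g x))"
    using assms L2_mult_integrable[OF assms] by (auto simp: L2_def)
  then show ?thesis
    using assms by (auto simp: L2_def power2_sum mult.assoc)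
qed

lemma L2_scale: "L2 M f \<Longrightarrow> L2 M (\<lambda>x. c * f x)"
  by (auto simp: L2_def power_mult_distrib)

lemma L2_diff: "L2 M f \<Longrightarrow> L2 M g \<Longrightarrow> L2 M (\<lambda>x. f x - g x)"
  using L2_add[of M f "\<lambda>x. -1 * g x"] L2_scale[of M g "-1"] by simp

lemma L2_sum: "(\<And>i. i \<in> I \<Longrightarrow> L2 M (f i)) \<Longrightarrow> L2 M (\<lambda>x. \<Sum>i\<in>I. f i x)"
proof (induction I rule: infinite_finite_induct)
  case (insert i I)
  then show ?case by (auto intro: L2_add)
qed (simp_all add: L2_def)

lemma second_moment_orthogonal_sum:
  fixes eps :: "'b \<Rightarrow> 'a \<Rightarrow> real"
  assumes "finite L" "inj_on \<iota> L" "\<And>n. L2 M (eps n)" "\<And>n. (\<integral>x. (eps n x)\<^sup>2 \<partial>M) = s2"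
    "\<And>m n. m \<noteq> n \<Longrightarrow> (\<integral>x. eps m x * eps n x \<partial>M) = 0"
  shows "(\<integral>x. (\<Sum>l\<in>L. \<gamma> l * eps (\<iota> l) x)\<^sup>2 \<partial>M) = s2 * (\<Sum>l\<in>L. (\<gamma> l)\<^sup>2)"
proof -
  have cross: "(\<integral>x. eps (\<iota> l) x * eps (\<iota> l') x \<partial>M) = (if l' = l then s2 else 0)"
    if "l \<in> L" "l' \<in> L" for l l'
    using assms(2,4,5) that by (auto simp: power2_eq_square dest: inj_onD)
  have "(\<integral>x. (\<Sum>l\<in>L. \<gamma> l * eps (\<iota> l) x)\<^sup>2 \<partial>M)
      = (\<integral>x. (\<Sum>l\<in>L. \<Sum>l'\<in>L. \<gamma> l * \<gamma> l' * (eps (\<iota> l) x * eps (\<iota> l') x)) \<partial>M)"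
    by (simp add: power2_eq_square sum_product algebra_simps)
  also have "\<dots> = (\<Sum>l\<in>L. \<Sum>l'\<in>L. \<gamma> l * \<gamma> l' * (\<integral>x. eps (\<iota> l) x * eps (\<iota> l') x \<partial>M))"
    using L2_mult_integrable[OF assms(3) assms(3)] by (simp add: integral_sum)
  also have "\<dots> = (\<Sum>l\<in>L. \<Sum>l'\<in>L. if l' = l then s2 * (\<gamma> l)\<^sup>2 else 0)"
    by (intro sum.cong refl) (simp add: cross power2_eq_square)
  also have "\<dots> = (\<Sum>l\<in>L. s2 * (\<gamma> l)\<^sup>2)"
    using assms(1) by (simp add: sum.delta')
  finally show ?thesis by (simp add: sum_distrib_left)
qed

lemma cross_moment_bound:
  assumes "L2 M Z" "L2 M D" "t > 0"
  shows "\<bar>\<integral>x. Z x * D x \<partial>M\<bar> \<le> t / 2 * (\<integral>x. (Z x)\<^sup>2 \<partial>M) + 1 / (2 * t) * (\<integral>x. (D x)\<^sup>2 \<partial>M)"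
proof -
  have pointwise: "\<bar>z * e\<bar> \<le> t / 2 * z\<^sup>2 + 1 / (2 * t) * e\<^sup>2" for z e :: real
  proof -
    have "2 * (t * \<bar>z\<bar>) * \<bar>e\<bar> \<le> (t * \<bar>z\<bar>)\<^sup>2 + \<bar>e\<bar>\<^sup>2" by (rule sum_squares_bound)
    then show ?thesis using \<open>t > 0\<close> by (simp add: abs_mult field_simps power2_eq_square)
  qed
  have "\<bar>\<integral>x. Z x * D x \<partial>M\<bar> \<le> (\<integral>x. \<bar>Z x * D x\<bar> \<partial>M)" by (rule integral_abs_bound)
  also have "\<dots> \<le> (\<integral>x. t / 2 * (Z x)\<^sup>2 + 1 / (2 * t) * (D x)\<^sup>2 \<partial>M)"
    using assms L2_mult_integrable[OF assms(1,2)] pointwise by (intro integral_mono) (auto simp: L2_def)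
  also have "\<dots> = t / 2 * (\<integral>x. (Z x)\<^sup>2 \<partial>M) + 1 / (2 * t) * (\<integral>x. (D x)\<^sup>2 \<partial>M)"
    using assms by (simp add: L2_def)
  finally show ?thesis .
qed

lemma second_moment_tendsto:
  assumes Z: "L2 M Z" and Y: "\<And>m. L2 M (Y m)"
    and lim: "(\<lambda>m. \<integral>x. (Z x - Y m x)\<^sup>2 \<partial>M) \<longlonglongrightarrow> 0"
  shows "(\<lambda>m. \<integral>x. (Y m x)\<^sup>2 \<partial>M) \<longlonglongrightarrow> (\<integral>x. (Z x)\<^sup>2 \<partial>M)"
proof -
  define D where "D m x = Y m x - Z x" for m x
  define a where "a = (\<integral>x. (Z x)\<^sup>2 \<partial>M)"
  have a: "a \<ge> 0" unfolding a_def by simp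
  have D: "L2 M (D m)" for m unfolding D_def using Y Z by (rule L2_diff)
  have b: "(\<lambda>m. \<integral>x. (D m x)\<^sup>2 \<partial>M) \<longlonglongrightarrow> 0"
    using lim by (simp add: D_def power2_commute)
  have cross: "(\<lambda>m. \<integral>x. Z x * D m x \<partial>M) \<longlonglongrightarrow> 0"
  proof (rule tendstoI)
    fix r :: real assume r: "r > 0"
    define t where "t = r / (a + 1)"
    have t: "t > 0" and ta: "t / 2 * a < r / 2"
      using r a by (auto simp: t_def field_simps)
    have "(\<lambda>m. 1 / (2 * t) * (\<integral>x. (D m x)\<^sup>2 \<partial>M)) \<longlonglongrightarrow> 0"
      by (rule tendsto_mult_right_zero[OF b])
    then have "\<forall>\<^sub>F m in sequentially. 1 / (2 * t) * (\<integral>x. (D m x)\<^sup>2 \<partial>M) < r / 2"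
      using r by (intro order_tendstoD) auto
    then show "\<forall>\<^sub>F m in sequentially. dist (\<integral>x. Z x * D m x \<partial>M) 0 < r"
    proof eventually_elim
      case (elim m)
      then show ?case
        using cross_moment_bound[OF Z D t, of m] ta by (simp add: a_def)
    qed
  qed
  have expand: "(\<integral>x. (Y m x)\<^sup>2 \<partial>M) = a + 2 * (\<integral>x. Z x * D m x \<partial>M) + (\<integral>x. (D m x)\<^sup>2 \<partial>M)" for m
  proof -
    have "(\<lambda>x. (Y m x)\<^sup>2) = (\<lambda>x. (Z x)\<^sup>2 + 2 * (Z x * D m x) + (D m x)\<^sup>2)"
      by (auto simp: D_def power2_eq_square algebra_simps)
    then show ?thesis
      using Z D[of m] L2_mult_integrable[OF Z D] by (simp add: a_def L2_def)
  qed
  show ?thesis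
    unfolding expand a_def[symmetric] using tendsto_add[OF tendsto_add[OF tendsto_const tendsto_mult_right_zero[OF cross]] b]
    by simp
qed

lemma second_moment_sum_null:
  assumes "finite J" "\<And>j m. j \<in> J \<Longrightarrow> L2 M (D j m)"
    "\<And>j. j \<in> J \<Longrightarrow> (\<lambda>m. \<integral>x. (D j m x)\<^sup>2 \<partial>M) \<longlonglongrightarrow> 0"
  shows "(\<lambda>m. \<integral>x. (\<Sum>j\<in>J. D j m x)\<^sup>2 \<partial>M) \<longlonglongrightarrow> 0"
  using assms
proof (induction J rule: finite_induct)
  case (insert i J)
  define S where "S m x = (\<Sum>j\<in>J. D j m x)" for m x
  have S: "L2 M (S m)" for m
    unfolding S_def using insert.prems by (intro L2_sum) auto
  have Di: "L2 M (D i m)" for m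
    using insert.prems by auto
  have bound: "(\<integral>x. (D i m x + S m x)\<^sup>2 \<partial>M) \<le> 2 * (\<integral>x. (D i m x)\<^sup>2 \<partial>M) + 2 * (\<integral>x. (S m x)\<^sup>2 \<partial>M)" for m
  proof -
    have "(\<integral>x. (D i m x + S m x)\<^sup>2 \<partial>M) \<le> (\<integral>x. 2 * (D i m x)\<^sup>2 + 2 * (S m x)\<^sup>2 \<partial>M)"
      using L2_add[OF Di S] Di S
      by (intro integral_mono) (auto simp: L2_def intro: sum_squares_bound[THEN order_trans] simp: power2_sum)
    then show ?thesis using Di S by (simp add: L2_def)
  qed
  have Di_null: "(\<lambda>m. \<integral>x. (D i m x)\<^sup>2 \<partial>M) \<longlonglongrightarrow> 0" and S_null: "(\<lambda>m. \<integral>x. (S m x)\<^sup>2 \<partial>M) \<longlonglongrightarrow> 0"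
    using insert.IH insert.prems unfolding S_def by auto
  have "(\<lambda>m. \<integral>x. (D i m x + S m x)\<^sup>2 \<partial>M) \<longlonglongrightarrow> 0"
  proof (rule tendsto_sandwich[where f="\<lambda>_. 0"])
    show "\<forall>\<^sub>F m in sequentially. (\<integral>x. (D i m x + S m x)\<^sup>2 \<partial>M)
        \<le> 2 * (\<integral>x. (D i m x)\<^sup>2 \<partial>M) + 2 * (\<integral>x. (S m x)\<^sup>2 \<partial>M)"
      using bound by simp
    show "(\<lambda>m. 2 * (\<integral>x. (D i m x)\<^sup>2 \<partial>M) + 2 * (\<integral>x. (S m x)\<^sup>2 \<partial>M)) \<longlonglongrightarrow> 0"
      using tendsto_add[OF tendsto_mult_right_zero[OF Di_null] tendsto_mult_right_zero[OF S_null]] by simp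
  qed simp_all
  then show ?case
    using insert by (simp add: S_def)
qed simp

definition ma_trunc :: "real \<Rightarrow> (int \<Rightarrow> 'a \<Rightarrow> real) \<Rightarrow> int \<Rightarrow> nat \<Rightarrow> 'a \<Rightarrow> real" where
  "ma_trunc d eps n m \<omega> = (\<Sum>i<m. fi_b d i * eps (n - int i) \<omega>)"

lemma fi_noiseD:
  assumes "fi_noise M d s2 eps X"
  shows "L2 M (eps n)" "(\<integral>x. (eps n x)\<^sup>2 \<partial>M) = s2"
    "m \<noteq> n \<Longrightarrow> (\<integral>x. eps m x * eps n x \<partial>M) = 0" "L2 M (X n)"
    "(\<lambda>m. \<integral>\<omega>. (X n \<omega> - ma_trunc d eps n m \<omega>)\<^sup>2 \<partial>M) \<longlonglongrightarrow> 0"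
  using assms by (auto simp: fi_noise_def L2_def ma_trunc_def)

lemma L2_ma_trunc: "fi_noise M d s2 eps X \<Longrightarrow> L2 M (ma_trunc d eps n m)"
  unfolding ma_trunc_def by (intro L2_sum L2_scale fi_noiseD(1))

lemma convolution_reindex:
  fixes g :: "nat \<Rightarrow> nat \<Rightarrow> real"
  shows "(\<Sum>j\<le>k. \<Sum>i<m - j. g j (i + j)) = (\<Sum>l<m. \<Sum>j\<le>min k l. g j l)"
proof -
  have shift: "(\<Sum>i<m - j. g j (i + j)) = (\<Sum>l<m. if j \<le> l then g j l else 0)" for j
  proof -
    have "(\<Sum>i<m - j. g j (i + j)) = sum (g j) {0 + j..<(m - j) + j}"
      unfolding sum.shift_bounds_nat_ivl by (simp add: atLeast0LessThan)
    also have "\<dots> = sum (g j) {j..<m}"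
      by (cases "j \<le> m") auto
    also have "\<dots> = (\<Sum>l<m. if j \<le> l then g j l else 0)"
      by (simp add: sum.If_cases atLeastLessThan_def Int_commute Collect_conj_eq lessThan_def atLeast_def)
    finally show ?thesis .
  qed
  have cut: "(\<Sum>j\<le>k. if j \<le> l then g j l else 0) = (\<Sum>j\<le>min k l. g j l)" for l
  proof -
    have "(\<Sum>j\<le>k. if j \<le> l then g j l else 0) = sum (\<lambda>j. g j l) {j \<in> {..k}. j \<le> l}"
      by (rule sum.inter_filter[symmetric]) simp
    also have "{j \<in> {..k}. j \<le> l} = {..min k l}" by auto
    finally show ?thesis .
  qed
  show ?thesis
    unfolding shift by (subst sum.swap) (simp only: cut)
qed

lemma filtered_ma_trunc:
  "(\<Sum>j\<le>k. \<alpha> j * ma_trunc d eps (n - int j) (m - j) \<omega>)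
     = (\<Sum>l<m. (\<Sum>j\<le>min k l. \<alpha> j * fi_b d (l - j)) * eps (n - int l) \<omega>)"
proof -
  have "(\<Sum>j\<le>k. \<alpha> j * ma_trunc d eps (n - int j) (m - j) \<omega>)
      = (\<Sum>j\<le>k. \<Sum>i<m - j. (\<lambda>j l. \<alpha> j * fi_b d (l - j) * eps (n - int l) \<omega>) j (i + j))"
    by (simp add: ma_trunc_def sum_distrib_left algebra_simps)
  also have "\<dots> = (\<Sum>l<m. \<Sum>j\<le>min k l. \<alpha> j * fi_b d (l - j) * eps (n - int l) \<omega>)"
    by (rule convolution_reindex)
  finally show ?thesis by (simp add: sum_distrib_right)
qed

lemma filtered_ma_trunc_converges:
  assumes N: "fi_noise M d s2 eps X"
  shows "(\<lambda>m. \<integral>\<omega>. ((\<Sum>j\<le>k. \<alpha> j * X (n - int j) \<omega>) - (\<Sum>j\<le>k. \<alpha> j * ma_trunc d eps (n - int j) (m - j) \<omega>))\<^sup>2 \<partial>M)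
     \<longlonglongrightarrow> 0"
proof -
  define D where "D j m \<omega> = \<alpha> j * (X (n - int j) \<omega> - ma_trunc d eps (n - int j) (m - j) \<omega>)" for j m \<omega>
  have "(\<lambda>m. \<integral>\<omega>. (\<Sum>j\<le>k. D j m \<omega>)\<^sup>2 \<partial>M) \<longlonglongrightarrow> 0"
  proof (rule second_moment_sum_null)
    show "L2 M (D j m)" for j m
      unfolding D_def using N by (intro L2_scale L2_diff fi_noiseD(4) L2_ma_trunc)
    fix j
    have "(\<lambda>m. \<integral>\<omega>. (X (n - int j) \<omega> - ma_trunc d eps (n - int j) (m - j) \<omega>)\<^sup>2 \<partial>M) \<longlonglongrightarrow> 0"
      using fi_noiseD(5)[OF N] by (rule filterlim_compose) (rule filterlim_minus_const_nat_at_top)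
    then show "(\<lambda>m. \<integral>\<omega>. (D j m \<omega>)\<^sup>2 \<partial>M) \<longlonglongrightarrow> 0"
      using tendsto_mult_right_zero[of _ sequentially "(\<alpha> j)\<^sup>2"] by (simp add: D_def power_mult_distrib)
  qed simp
  then show ?thesis
    by (simp add: D_def sum_subtractf right_diff_distrib)
qed

lemma filtered_second_moment:
  assumes N: "fi_noise M d s2 eps X"
  shows "(\<lambda>m. s2 * (\<Sum>l<m. (\<Sum>j\<le>min k l. \<alpha> j * fi_b d (l - j))\<^sup>2))
     \<longlonglongrightarrow> (\<integral>\<omega>. (\<Sum>j\<le>k. \<alpha> j * X (n - int j) \<omega>)\<^sup>2 \<partial>M)"
proof -
  define Y where "Y m \<omega> = (\<Sum>j\<le>k. \<alpha> j * ma_trunc d eps (n - int j) (m - j) \<omega>)" for m \<omega>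
  have "(\<integral>\<omega>. (Y m \<omega>)\<^sup>2 \<partial>M) = s2 * (\<Sum>l<m. (\<Sum>j\<le>min k l. \<alpha> j * fi_b d (l - j))\<^sup>2)" for m
    unfolding Y_def filtered_ma_trunc
    by (rule second_moment_orthogonal_sum) (auto simp: inj_on_def fi_noiseD[OF N])
  moreover have "(\<lambda>m. \<integral>\<omega>. (Y m \<omega>)\<^sup>2 \<partial>M) \<longlonglongrightarrow> (\<integral>\<omega>. (\<Sum>j\<le>k. \<alpha> j * X (n - int j) \<omega>)\<^sup>2 \<partial>M)"
  proof (rule second_moment_tendsto)
    show "L2 M (\<lambda>\<omega>. \<Sum>j\<le>k. \<alpha> j * X (n - int j) \<omega>)" "L2 M (Y m)" for m
      unfolding Y_def by (intro L2_sum L2_scale fi_noiseD(4)[OF N] L2_ma_trunc[OF N])+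
    show "(\<lambda>m. \<integral>\<omega>. ((\<Sum>j\<le>k. \<alpha> j * X (n - int j) \<omega>) - Y m \<omega>)\<^sup>2 \<partial>M) \<longlonglongrightarrow> 0"
      unfolding Y_def using N by (rule filtered_ma_trunc_converges)
  qed
  ultimately show ?thesis by simp
qed

lemma prediction_error_filter:
  assumes "0 < d" "d < 1"
  shows "X (int k + 1) \<omega> - fi_pred d X k \<omega> = (\<Sum>j\<le>k. poch_frac (-d) j * X (int k + 1 - int j) \<omega>)"
proof -
  have "{..k} = insert 0 {1..k}" by auto
  then show ?thesis
    using assms by (simp add: fi_pred_def fi_a_poch_frac)
qed

definition tail_sum :: "real \<Rightarrow> nat \<Rightarrow> real" where
  "tail_sum d k = (\<Sum>n. (real (n + 1) * poch_frac d (n + 1) / real (k + 1 + n))\<^sup>2)"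

lemma prediction_error_formula:
  assumes d: "0 < d" "d < 1" and s2: "s2 > 0" and N: "fi_noise M d s2 eps X"
  shows "(\<integral>\<omega>. (X (int k + 1) \<omega> - fi_pred d X k \<omega>)\<^sup>2 \<partial>M) = s2 * (1 + (poch_frac (1 - d) k)\<^sup>2 * tail_sum d k)"
proof -
  define E where "E = (\<integral>\<omega>. (X (int k + 1) \<omega> - fi_pred d X k \<omega>)\<^sup>2 \<partial>M)"
  define A where "A = poch_frac (1 - d) k"
  define t where "t n = real (n + 1) * poch_frac d (n + 1) / real (k + 1 + n)" for n
  have "(\<lambda>m. s2 * (\<Sum>l<m. (err_coef d k l)\<^sup>2)) \<longlonglongrightarrow> E"
    using filtered_second_moment[OF N, where k=k and \<alpha>="poch_frac (-d)" and n="int k + 1"] d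
    by (simp add: E_def prediction_error_filter fi_b_poch_frac err_coef_def)
  from tendsto_divide[OF this tendsto_const, of s2]
  have "(\<lambda>m. (\<Sum>l<m. (err_coef d k l)\<^sup>2)) \<longlonglongrightarrow> E / s2"
    using s2 by simp
  then have all: "(\<lambda>l. (err_coef d k l)\<^sup>2) sums (E / s2)"
    by (simp add: sums_def)
  have head: "(\<Sum>l<k + 1. (err_coef d k l)\<^sup>2) = 1"
  proof -
    have "{..<k + 1} = insert 0 {1..k}" by auto
    then show ?thesis by (simp add: err_coef_0 err_coef_mid)
  qed
  have "(\<lambda>n. (err_coef d k (n + (k + 1)))\<^sup>2) sums (E / s2 - 1)"
    using all head sums_iff_shift[of "\<lambda>l. (err_coef d k l)\<^sup>2" "k + 1"] by simp
  moreover have "err_coef d k (n + (k + 1)) = A * t n" for n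
    using err_coef_tail[of d k n] by (simp add: A_def t_def add_ac)
  ultimately have "(\<lambda>n. A\<^sup>2 * (t n)\<^sup>2) sums (E / s2 - 1)"
    by (simp add: power_mult_distrib)
  moreover have A: "A\<^sup>2 > 0"
    using poch_frac_pos[of "1 - d" k] d by (simp add: A_def)
  ultimately have "(\<lambda>n. (t n)\<^sup>2) sums ((E / s2 - 1) / A\<^sup>2)"
    using sums_divide[of "\<lambda>n. A\<^sup>2 * (t n)\<^sup>2" _ "A\<^sup>2"] by simp
  then have "tail_sum d k = (E / s2 - 1) / A\<^sup>2"
    unfolding tail_sum_def t_def by (rule sums_unique[symmetric])
  then show ?thesis
    using A s2 by (simp add: E_def A_def field_simps)
qed

definition riemann_weight :: "(nat \<Rightarrow> real) \<Rightarrow> real \<Rightarrow> nat \<Rightarrow> nat \<Rightarrow> real" where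
  "riemann_weight \<beta> p k m = (\<beta> m)\<^sup>2 * (real m / real k) powr p / (1 + real m / real k)\<^sup>2"

definition riemann_step :: "(nat \<Rightarrow> real) \<Rightarrow> real \<Rightarrow> nat \<Rightarrow> real \<Rightarrow> real" where
  "riemann_step \<beta> p k x =
     (\<Sum>n. riemann_weight \<beta> p k (n + 1) * indicator {real n / real k <.. real (n + 1) / real k} x)"

lemma riemann_weight_nonneg: "riemann_weight \<beta> p k m \<ge> 0"
  unfolding riemann_weight_def by (intro divide_nonneg_nonneg mult_nonneg_nonneg) auto

lemma indicator_grid_cell:
  assumes "k > 0"
  shows "(indicator {real n / real k <.. real (n + 1) / real k} x :: real) =
         (if \<lceil>real k * x\<rceil> = int n + 1 then 1 else 0)"
proof -
  have "x \<in> {real n / real k <.. real (n + 1) / real k} \<longleftrightarrow> real n < real k * x \<and> real k * x \<le> real n + 1"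
    using assms by (simp add: divide_less_eq le_divide_eq mult.commute add.commute)
  also have "\<dots> \<longleftrightarrow> \<lceil>real k * x\<rceil> = int n + 1"
    by (simp add: ceiling_eq_iff)
  finally show ?thesis by simp
qed

lemma grid_cells_single:
  fixes c :: "nat \<Rightarrow> real"
  assumes "k > 0"
  shows "(\<lambda>n. c n * indicator {real n / real k <.. real (n + 1) / real k} x)
       = (\<lambda>n. if n = nat \<lceil>real k * x\<rceil> - 1 then (if x > 0 then c n else 0) else 0)"
proof -
  have pos: "0 < \<lceil>real k * x\<rceil> \<longleftrightarrow> x > 0"
    using assms by (simp add: zero_less_mult_iff)
  have "\<lceil>real k * x\<rceil> = int n + 1 \<longleftrightarrow> x > 0 \<and> n = nat \<lceil>real k * x\<rceil> - 1" for n
    unfolding pos[symmetric] by linarith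
  then show ?thesis
    unfolding indicator_grid_cell[OF assms] by auto
qed

lemma riemann_step_eval:
  assumes "k > 0"
  shows "riemann_step \<beta> p k x = (if x > 0 then riemann_weight \<beta> p k (nat \<lceil>real k * x\<rceil>) else 0)"
proof -
  define N where "N = nat \<lceil>real k * x\<rceil> - 1"
  have "riemann_step \<beta> p k x = (if x > 0 then riemann_weight \<beta> p k (N + 1) else 0)"
    unfolding riemann_step_def grid_cells_single[OF assms] N_def[symmetric]
    using sums_single[of N "\<lambda>n. if x > 0 then riemann_weight \<beta> p k (n + 1) else 0"]
    by (simp add: sums_iff)
  moreover have "x > 0 \<Longrightarrow> N + 1 = nat \<lceil>real k * x\<rceil>"
    using assms unfolding N_def by (auto simp: zero_less_mult_iff)
  ultimately show ?thesis by auto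
qed

lemma riemann_step_0: "riemann_step \<beta> p 0 x = 0"
  by (simp add: riemann_step_def)

lemma powr_ratio_le:
  fixes p x y :: real
  assumes "0 < p" "p < 1" "0 \<le> x" "x \<le> y"
  shows "y powr p / (1 + y)\<^sup>2 \<le> (1 + x) powr (p - 2)"
proof -
  have "y powr p / (1 + y)\<^sup>2 \<le> (1 + y) powr p / (1 + y)\<^sup>2"
    using assms by (intro divide_right_mono powr_mono2) auto
  also have "\<dots> = (1 + y) powr (p - 2)"
  proof -
    have "(1 + y)\<^sup>2 = (1 + y) powr 2" using assms by simp
    then show ?thesis by (simp only: powr_diff)
  qed
  also have "\<dots> \<le> (1 + x) powr (p - 2)"
    using assms by (intro powr_mono2') auto
  finally show ?thesis .
qed

lemma riemann_weight_le:
  assumes "0 < p" "p < 1" "\<bar>\<beta> m\<bar> \<le> B" "0 \<le> x" "x \<le> real m / real k"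
  shows "riemann_weight \<beta> p k m \<le> B\<^sup>2 * (1 + x) powr (p - 2)"
proof -
  have "(\<beta> m)\<^sup>2 \<le> B\<^sup>2"
    using assms(3) by (metis abs_ge_zero power2_abs power_mono)
  moreover have "(real m / real k) powr p / (1 + real m / real k)\<^sup>2 \<le> (1 + x) powr (p - 2)"
    using assms by (intro powr_ratio_le) auto
  ultimately show ?thesis
    unfolding riemann_weight_def times_divide_eq_right[symmetric]
    by (intro mult_mono) auto
qed

(* For p < 1 the weights are summable, since they decay like m^(p-2). *)
lemma summable_riemann_weight:
  assumes k: "k > 0" and p: "0 < p" "p < 1" and B: "\<And>m. \<bar>\<beta> m\<bar> \<le> B"
  shows "summable (\<lambda>n. riemann_weight \<beta> p k (n + 1))"
proof (rule summable_comparison_test')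
  have "summable (\<lambda>n. real (Suc n) powr (p - 2))"
    using p by (subst summable_Suc_iff) (simp add: summable_real_powr_iff)
  then show "summable (\<lambda>n. B\<^sup>2 * (real (n + 1) / real k) powr (p - 2))"
    by (intro summable_mult) (simp add: powr_divide summable_divide)
next
  fix n :: nat
  have "riemann_weight \<beta> p k (n + 1) \<le> B\<^sup>2 * (1 + real (n + 1) / real k) powr (p - 2)"
    using p B by (intro riemann_weight_le) auto
  also have "\<dots> \<le> B\<^sup>2 * (real (n + 1) / real k) powr (p - 2)"
    using p k by (intro mult_left_mono powr_mono2') auto
  finally show "norm (riemann_weight \<beta> p k (n + 1)) \<le> B\<^sup>2 * (real (n + 1) / real k) powr (p - 2)"
    using riemann_weight_nonneg by simp
qed

lemma riemann_step_bound:
  assumes p: "0 < p" "p < 1" and B: "\<And>m. \<bar>\<beta> m\<bar> \<le> B"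
  shows "norm (riemann_step \<beta> p k x) \<le> B\<^sup>2 * ((1 + x) powr (p - 2) * indicator {0..} x)"
proof (cases "k > 0 \<and> x > 0")
  case True
  then have "x \<le> real (nat \<lceil>real k * x\<rceil>) / real k"
    by (simp add: le_divide_eq mult.commute)
  then show ?thesis
    using True p B riemann_weight_nonneg riemann_weight_le[OF p]
    by (simp add: riemann_step_eval)
next
  case False
  then have "riemann_step \<beta> p k x = 0"
    by (cases "k = 0") (auto simp: riemann_step_eval riemann_step_0)
  then show ?thesis by simp
qed

lemma grid_point_asymp:
  fixes x :: real
  assumes x: "x > 0"
  defines "m \<equiv> \<lambda>k. nat \<lceil>real k * x\<rceil>"
  shows "(\<lambda>k. real (m k) / real k) \<longlonglongrightarrow> x" and "filterlim m at_top sequentially"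
proof -
  have lower: "real k * x \<le> real (m k)" for k
    unfolding m_def by linarith
  have upper: "real (m k) \<le> real k * x + 1" for k
  proof -
    have "real k * x \<ge> 0" using x by simp
    then show ?thesis unfolding m_def by linarith
  qed
  show "(\<lambda>k. real (m k) / real k) \<longlonglongrightarrow> x"
  proof (rule tendsto_sandwich[where f="\<lambda>_. x" and h="\<lambda>k. x + 1 / real k"])
    show "\<forall>\<^sub>F k in sequentially. x \<le> real (m k) / real k"
      using eventually_gt_at_top[of "0::nat"]
      by eventually_elim (use lower in \<open>simp add: le_divide_eq mult.commute\<close>)
    show "\<forall>\<^sub>F k in sequentially. real (m k) / real k \<le> x + 1 / real k"
      using eventually_gt_at_top[of "0::nat"]
    proof eventually_elim
      case (elim k)
      have "real (m k) / real k \<le> (real k * x + 1) / real k"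
        by (intro divide_right_mono upper) simp
      also have "\<dots> = x + 1 / real k" using elim by (simp add: field_simps)
      finally show ?case .
    qed
    show "(\<lambda>k. x + 1 / real k) \<longlonglongrightarrow> x"
      using tendsto_add[OF tendsto_const lim_inverse_n'] by simp
  qed simp
  have "filterlim (\<lambda>k. x * real k) at_top sequentially"
    using x by (intro filterlim_tendsto_pos_mult_at_top[OF tendsto_const] filterlim_real_sequentially)
  then show "filterlim m at_top sequentially"
    unfolding filterlim_sequentially_iff_filterlim_real
    by (rule filterlim_at_top_mono) (use lower in \<open>simp add: mult.commute\<close>)
qed

lemma riemann_step_tendsto:
  assumes p: "0 < p" and \<beta>: "\<beta> \<longlonglongrightarrow> L"
  shows "(\<lambda>k. riemann_step \<beta> p k x) \<longlonglongrightarrow> (if x > 0 then L\<^sup>2 * x powr p / (1 + x)\<^sup>2 else 0)"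
proof (cases "x > 0")
  case True
  define m where "m k = nat \<lceil>real k * x\<rceil>" for k
  have "(\<lambda>k. (\<beta> (m k))\<^sup>2 * (real (m k) / real k) powr p / (1 + real (m k) / real k)\<^sup>2)
      \<longlonglongrightarrow> L\<^sup>2 * x powr p / (1 + x)\<^sup>2"
    using True grid_point_asymp[OF True] filterlim_compose[OF \<beta>]
    unfolding m_def by (intro tendsto_intros) auto
  moreover have "\<forall>\<^sub>F k in sequentially. riemann_step \<beta> p k x = riemann_weight \<beta> p k (m k)"
    using eventually_gt_at_top[of "0::nat"]
    by eventually_elim (use True in \<open>simp add: riemann_step_eval m_def\<close>)
  ultimately show ?thesis
    using True by (simp add: riemann_weight_def tendsto_cong)
next
  case False
  have "\<forall>\<^sub>F k in sequentially. riemann_step \<beta> p k x = 0"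
    using eventually_gt_at_top[of "0::nat"]
    by eventually_elim (use False in \<open>simp add: riemann_step_eval\<close>)
  then show ?thesis
    using False by (simp add: tendsto_eventually)
qed

lemma integrable_powr_tail:
  fixes q :: real
  assumes q: "q < -1"
  shows "integrable lborel (\<lambda>x::real. (1 + x) powr q * indicator {0..} x)"
proof (rule integrableI_nonneg)
  show "AE x in lborel. 0 \<le> (1 + x) powr q * indicator {0..} x"
    by (auto split: split_indicator)
  have "(\<integral>\<^sup>+x. ennreal ((1 + x) powr q * indicator {0..} x) \<partial>lborel)
      = (\<integral>\<^sup>+x. ennreal ((1 + x) powr q) * indicator {0..} x \<partial>lborel)"
    by (intro nn_integral_cong) (auto split: split_indicator)
  also have "\<dots> = ennreal (0 - (1 + 0) powr (q + 1) / (q + 1))"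
  proof (rule nn_integral_FTC_atLeast)
    fix x :: real assume "0 \<le> x"
    then show "((\<lambda>x. (1 + x) powr (q + 1) / (q + 1)) has_real_derivative (1 + x) powr q) (at x)"
      using q by (auto intro!: derivative_eq_intros)
  next
    have "((\<lambda>x::real. (1 + x) powr (q + 1)) \<longlongrightarrow> 0) at_top"
      using q by (intro tendsto_neg_powr) (simp, real_asymp)
    then show "((\<lambda>x::real. (1 + x) powr (q + 1) / (q + 1)) \<longlongrightarrow> 0) at_top"
      using tendsto_divide_zero by blast
  qed auto
  finally show "(\<integral>\<^sup>+x. ennreal ((1 + x) powr q * indicator {0..} x) \<partial>lborel) < \<infinity>"
    by (simp only: ennreal_less_top infinity_ennreal_def)
qed simp

lemma riemann_step_integral:
  assumes k: "k > 0" and p: "0 < p" "p < 1" and B: "\<And>m. \<bar>\<beta> m\<bar> \<le> B"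
  shows "(\<integral>x. riemann_step \<beta> p k x \<partial>lborel) = (\<Sum>n. riemann_weight \<beta> p k (n + 1)) / real k"
proof -
  define f where "f n x = riemann_weight \<beta> p k (n + 1) * indicator {real n / real k <.. real (n + 1) / real k} x"
    for n x
  have cell: "real n / real k \<le> real (n + 1) / real k" for n
    using k by (intro divide_right_mono) auto
  have int_f: "integrable lborel (f n)" for n
    unfolding f_def using cell[of n] by (intro integrable_mult_right integrable_real_indicator) auto
  have integral_f: "(\<integral>x. f n x \<partial>lborel) = riemann_weight \<beta> p k (n + 1) / real k" for n
    unfolding f_def using cell[of n] k by (simp add: field_simps)
  have norm_f: "norm (f n x) = f n x" for n x
    using riemann_weight_nonneg unfolding f_def by simp
  have summable: "summable (\<lambda>n. riemann_weight \<beta> p k (n + 1))"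
    using k p B by (rule summable_riemann_weight)
  have "(\<integral>x. (\<Sum>n. f n x) \<partial>lborel) = (\<Sum>n. (\<integral>x. f n x \<partial>lborel))"
  proof (rule integral_suminf)
    show "AE x in lborel. summable (\<lambda>n. norm (f n x))"
      unfolding norm_f unfolding f_def grid_cells_single[OF k]
      by (intro AE_I2 sums_summable[OF sums_single])
    show "summable (\<lambda>n. \<integral>x. norm (f n x) \<partial>lborel)"
      unfolding norm_f integral_f using summable by (rule summable_divide)
  qed (rule int_f)
  also have "\<dots> = (\<Sum>n. riemann_weight \<beta> p k (n + 1)) / real k"
    unfolding integral_f using summable by (rule suminf_divide)
  finally show ?thesis
    unfolding riemann_step_def f_def .
qed

lemma tendsto_imp_bounded:
  fixes \<beta> :: "nat \<Rightarrow> real"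
  assumes "\<beta> \<longlonglongrightarrow> L"
  shows "\<exists>B. \<forall>m. \<bar>\<beta> m\<bar> \<le> B"
  using convergent_imp_Bseq[OF convergentI[OF assms]] by (metis BseqE real_norm_def)

(* The Riemann sums converge to the integral, by dominated convergence. *)
lemma riemann_sum_tendsto:
  assumes p: "0 < p" "p < 1" and \<beta>: "\<beta> \<longlonglongrightarrow> L"
  shows "(\<lambda>k. (\<Sum>n. riemann_weight \<beta> p k (n + 1)) / real k)
           \<longlonglongrightarrow> (\<integral>x. (if x > 0 then L\<^sup>2 * x powr p / (1 + x)\<^sup>2 else 0) \<partial>lborel)"
proof -
  obtain B where B: "\<And>m. \<bar>\<beta> m\<bar> \<le> B"
    using tendsto_imp_bounded[OF \<beta>] by blast
  have "(\<lambda>k. \<integral>x. riemann_step \<beta> p k x \<partial>lborel)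
      \<longlonglongrightarrow> (\<integral>x. (if x > 0 then L\<^sup>2 * x powr p / (1 + x)\<^sup>2 else 0) \<partial>lborel)"
  proof (rule integral_dominated_convergence)
    show "integrable lborel (\<lambda>x. B\<^sup>2 * ((1 + x) powr (p - 2) * indicator {0..} x))"
      using p by (intro integrable_mult_right integrable_powr_tail) simp
    show "AE x in lborel. norm (riemann_step \<beta> p k x) \<le> B\<^sup>2 * ((1 + x) powr (p - 2) * indicator {0..} x)" for k
      using p B by (intro AE_I2 riemann_step_bound)
    show "AE x in lborel. (\<lambda>k. riemann_step \<beta> p k x)
        \<longlonglongrightarrow> (if x > 0 then L\<^sup>2 * x powr p / (1 + x)\<^sup>2 else 0)"
      using p \<beta> by (intro AE_I2 riemann_step_tendsto)
  qed (auto simp: riemann_step_def)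
  moreover have "\<forall>\<^sub>F k in sequentially.
      (\<integral>x. riemann_step \<beta> p k x \<partial>lborel) = (\<Sum>n. riemann_weight \<beta> p k (n + 1)) / real k"
    using eventually_gt_at_top[of "0::nat"] by eventually_elim (simp add: riemann_step_integral[OF _ p B])
  ultimately show ?thesis
    by (rule Lim_transform_eventually)
qed

(* For L > 0 the Riemann sums stay above L^2 / 36: the k weights with k <= m < 2k already
   contribute that much. *)
lemma riemann_sum_lower_bound:
  assumes p: "0 < p" "p < 1" and \<beta>: "\<beta> \<longlonglongrightarrow> L" and L: "L > 0"
  shows "\<forall>\<^sub>F k in sequentially. L\<^sup>2 / 36 \<le> (\<Sum>n. riemann_weight \<beta> p k (n + 1)) / real k"
proof -
  obtain B where B: "\<And>m. \<bar>\<beta> m\<bar> \<le> B"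
    using tendsto_imp_bounded[OF \<beta>] by blast
  have "\<forall>\<^sub>F m in sequentially. \<beta> m > L / 2"
    using \<beta> L by (intro order_tendstoD) auto
  then obtain N where N: "\<And>m. m \<ge> N \<Longrightarrow> \<beta> m > L / 2"
    by (auto simp: eventually_sequentially)
  have term_lower: "L\<^sup>2 / 36 \<le> riemann_weight \<beta> p k m" if "k > 0" "N \<le> k" "k \<le> m" "m < 2 * k" for k m
  proof -
    define r where "r = real m / real k"
    have r: "1 \<le> r" "r \<le> 2" using that by (auto simp: r_def le_divide_eq divide_le_eq)
    have "(L / 2)\<^sup>2 \<le> (\<beta> m)\<^sup>2" using N[of m] that L by (intro power_mono) auto
    moreover have "1 \<le> r powr p" using r p by (intro ge_one_powr_ge_zero) auto
    ultimately have "(L / 2)\<^sup>2 \<le> (\<beta> m)\<^sup>2 * r powr p"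
      by (metis mult_mono mult.right_neutral zero_le_power2 zero_le_one)
    moreover have "(1 + r)\<^sup>2 \<le> 3\<^sup>2" using r by (intro power_mono) auto
    ultimately have "(L / 2)\<^sup>2 / 3\<^sup>2 \<le> (\<beta> m)\<^sup>2 * r powr p / (1 + r)\<^sup>2"
      using r by (intro frac_le) auto
    then show ?thesis by (simp add: riemann_weight_def r_def power_divide)
  qed
  show ?thesis
    using eventually_ge_at_top[of "max N 1"]
  proof eventually_elim
    case (elim k)
    then have k: "k > 0" by simp
    have "real k * (L\<^sup>2 / 36) = (\<Sum>n\<in>{k - 1..<2 * k - 1}. L\<^sup>2 / 36)" using k by simp
    also have "\<dots> \<le> (\<Sum>n\<in>{k - 1..<2 * k - 1}. riemann_weight \<beta> p k (n + 1))"
      using elim by (intro sum_mono term_lower) auto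
    also have "\<dots> \<le> (\<Sum>n. riemann_weight \<beta> p k (n + 1))"
      using summable_riemann_weight[OF k p B] riemann_weight_nonneg by (intro sum_le_suminf) auto
    finally show ?case using k by (simp add: field_simps)
  qed
qed

lemma riemann_sum_limit_pos:
  assumes p: "0 < p" "p < 1" and \<beta>: "\<beta> \<longlonglongrightarrow> L" and L: "L > 0"
  shows "\<exists>I>0. (\<lambda>k. (\<Sum>n. riemann_weight \<beta> p k (n + 1)) / real k) \<longlonglongrightarrow> I"
proof -
  define I where "I = (\<integral>x. (if x > 0 then L\<^sup>2 * x powr p / (1 + x)\<^sup>2 else 0) \<partial>lborel)"
  have lim: "(\<lambda>k. (\<Sum>n. riemann_weight \<beta> p k (n + 1)) / real k) \<longlonglongrightarrow> I"
    unfolding I_def using p \<beta> by (rule riemann_sum_tendsto)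
  have "L\<^sup>2 / 36 \<le> I"
    using lim riemann_sum_lower_bound[OF p \<beta> L] by (rule tendsto_lowerbound) simp
  then show ?thesis
    using lim L by (intro exI[of _ I]) (auto intro: less_le_trans[of 0 "L\<^sup>2 / 36"])
qed

lemma riemann_weight_ma_coef:
  fixes d :: real
  assumes k: "k > 0" and m: "m > 0"
  defines "\<beta> \<equiv> \<lambda>m. poch_frac d m * real m powr (1 - d)"
  shows "riemann_weight \<beta> (2 * d) k m / real k
       = real k powr (1 - 2 * d) * (real m * poch_frac d m / real (k + m))\<^sup>2"
proof -
  define M K where "M = real m" and "K = real k"
  have pos: "M > 0" "K > 0" using k m by (auto simp: M_def K_def)
  have "(M powr (1 - d))\<^sup>2 = M powr ((1 - d) + (1 - d))"
    by (simp only: power2_eq_square powr_add)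
  also have "\<dots> = M powr 2 / M powr (2 * d)"
    unfolding powr_diff[symmetric] by (simp add: algebra_simps)
  also have "\<dots> = M\<^sup>2 / M powr (2 * d)"
    using pos by simp
  finally have M_part: "(M powr (1 - d))\<^sup>2 = M\<^sup>2 / M powr (2 * d)" .
  have K_part: "K powr (1 - 2 * d) = K / K powr (2 * d)"
    using pos by (simp add: powr_diff)
  have "riemann_weight \<beta> (2 * d) k m / real k
      = (poch_frac d m)\<^sup>2 * (M powr (1 - d))\<^sup>2 * (M powr (2 * d) / K powr (2 * d)) / ((K + M) / K)\<^sup>2 / K"
    using pos by (simp add: riemann_weight_def \<beta>_def M_def[symmetric] K_def[symmetric] powr_divide
      power_mult_distrib add_divide_distrib)
  also have "\<dots> = K powr (1 - 2 * d) * (M * poch_frac d m / (K + M))\<^sup>2"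
  proof -
    have cancel: "b\<^sup>2 * (M\<^sup>2 / Q) * (Q / P) / ((K + M) / K)\<^sup>2 / K = K / P * (M * b / (K + M))\<^sup>2"
      if "Q > 0" "P > 0" for b P Q :: real
      using pos that by (simp add: power_divide power_mult_distrib field_simps power2_eq_square[of K])
    show ?thesis
      unfolding M_part K_part using pos by (intro cancel) auto
  qed
  finally show ?thesis by (simp add: M_def K_def)
qed

lemma tail_sum_riemann:
  fixes d :: real
  assumes d: "0 < d" "d < 1/2" and k: "k > 0"
  defines "\<beta> \<equiv> \<lambda>m. poch_frac d m * real m powr (1 - d)"
  shows "real k * (poch_frac (1 - d) k)\<^sup>2 * tail_sum d k
       = (poch_frac (1 - d) k * real k powr d)\<^sup>2 * ((\<Sum>n. riemann_weight \<beta> (2 * d) k (n + 1)) / real k)"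
proof -
  define c where "c = real k powr (1 - 2 * d)"
  define t where "t n = (real (n + 1) * poch_frac d (n + 1) / real (k + 1 + n))\<^sup>2" for n
  obtain B where B: "\<And>m. \<bar>\<beta> m\<bar> \<le> B"
    using tendsto_imp_bounded[OF poch_frac_asymp[OF d(1)]] unfolding \<beta>_def by blast
  have w_summable: "summable (\<lambda>n. riemann_weight \<beta> (2 * d) k (n + 1))"
    using k d B by (intro summable_riemann_weight) auto
  have w_t: "riemann_weight \<beta> (2 * d) k (n + 1) / real k = c * t n" for n
    using riemann_weight_ma_coef[OF k, of "n + 1" d] unfolding \<beta>_def c_def t_def by (simp add: add_ac)
  have "c \<noteq> 0" using k by (simp add: c_def)
  then have "summable t"
    using summable_divide[OF w_summable, of "real k"] summable_mult[of _ "1 / c"] unfolding w_t by simp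
  have "(\<Sum>n. riemann_weight \<beta> (2 * d) k (n + 1)) / real k = (\<Sum>n. riemann_weight \<beta> (2 * d) k (n + 1) / real k)"
    using w_summable by (rule suminf_divide[symmetric])
  also have "\<dots> = c * tail_sum d k"
    unfolding w_t tail_sum_def t_def[symmetric] using \<open>summable t\<close> by (rule suminf_mult)
  finally have riemann: "(\<Sum>n. riemann_weight \<beta> (2 * d) k (n + 1)) / real k = c * tail_sum d k" .
  have "(real k powr d)\<^sup>2 * c = real k powr (d + d + (1 - 2 * d))"
    unfolding c_def by (simp only: power2_eq_square powr_add)
  also have "\<dots> = real k" using k by simp
  finally show ?thesis
    unfolding riemann by (simp add: power_mult_distrib algebra_simps)
qed

lemma scaled_tail_sum_limit:
  assumes d: "0 < d" "d < 1/2"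
  shows "\<exists>\<Lambda>>0. (\<lambda>k. real k * (poch_frac (1 - d) k)\<^sup>2 * tail_sum d k) \<longlonglongrightarrow> \<Lambda>"
proof -
  define \<beta> where "\<beta> = (\<lambda>m. poch_frac d m * real m powr (1 - d))"
  have "\<beta> \<longlonglongrightarrow> 1 / Gamma d"
    unfolding \<beta>_def using d by (intro poch_frac_asymp) simp
  moreover have "Gamma d > 0" using d by (intro Gamma_real_pos)
  ultimately have "\<exists>I>0. (\<lambda>k. (\<Sum>n. riemann_weight \<beta> (2 * d) k (n + 1)) / real k) \<longlonglongrightarrow> I"
    using d riemann_sum_limit_pos[of "2 * d" \<beta> "1 / Gamma d"] by auto
  then obtain I where I: "I > 0" "(\<lambda>k. (\<Sum>n. riemann_weight \<beta> (2 * d) k (n + 1)) / real k) \<longlonglongrightarrow> I"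
    by blast
  have \<alpha>: "(\<lambda>k. poch_frac (1 - d) k * real k powr d) \<longlonglongrightarrow> 1 / Gamma (1 - d)"
    using poch_frac_asymp[of "1 - d"] d by simp
  have "(\<lambda>k. (poch_frac (1 - d) k * real k powr d)\<^sup>2 * ((\<Sum>n. riemann_weight \<beta> (2 * d) k (n + 1)) / real k))
      \<longlonglongrightarrow> (1 / Gamma (1 - d))\<^sup>2 * I"
    by (intro tendsto_intros \<alpha> I)
  moreover have "\<forall>\<^sub>F k in sequentially.
      (poch_frac (1 - d) k * real k powr d)\<^sup>2 * ((\<Sum>n. riemann_weight \<beta> (2 * d) k (n + 1)) / real k)
      = real k * (poch_frac (1 - d) k)\<^sup>2 * tail_sum d k"
    using eventually_gt_at_top[of "0::nat"]
    by eventually_elim (simp only: tail_sum_riemann[OF d] \<beta>_def)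
  ultimately have "(\<lambda>k. real k * (poch_frac (1 - d) k)\<^sup>2 * tail_sum d k) \<longlonglongrightarrow> (1 / Gamma (1 - d))\<^sup>2 * I"
    by (rule Lim_transform_eventually)
  moreover have "Gamma (1 - d) > 0" using d by (intro Gamma_real_pos) simp
  ultimately show ?thesis
    using I by (intro exI[of _ "(1 / Gamma (1 - d))\<^sup>2 * I"]) simp
qed

lemma smallo_of_scaled_limit:
  fixes f :: "nat \<Rightarrow> real"
  assumes "(\<lambda>k. real k * f k) \<longlonglongrightarrow> C"
  shows "(\<lambda>k. f k - C / real k) \<in> o(\<lambda>k. 1 / real k)"
proof (rule smalloI_tendsto)
  have "(\<lambda>k. real k * f k - C) \<longlonglongrightarrow> 0"
    using tendsto_diff[OF assms tendsto_const, of C] by simp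
  moreover have "\<forall>\<^sub>F k in sequentially. real k * f k - C = (f k - C / real k) / (1 / real k)"
    using eventually_gt_at_top[of "0::nat"] by eventually_elim (simp add: field_simps)
  ultimately show "(\<lambda>k. (f k - C / real k) / (1 / real k)) \<longlonglongrightarrow> 0"
    by (rule Lim_transform_eventually)
qed (simp add: eventually_gt_at_top)

theorem proposition1:
  fixes d s2 :: real
  assumes "0 < d" "d < 1/2" "s2 > 0"
  shows "\<exists>C>0. \<forall>(M :: 'a measure) eps X. fi_noise M d s2 eps X \<longrightarrow>
           (\<lambda>k::nat. (\<integral>\<omega>. (X (int k + 1) \<omega> - fi_pred d X k \<omega>)\<^sup>2 \<partial>M) - s2 - C / real k)
             \<in> o(\<lambda>k. 1 / real k)"
proof -
  obtain \<Lambda> where \<Lambda>: "\<Lambda> > 0" and lim: "(\<lambda>k. real k * (poch_frac (1 - d) k)\<^sup>2 * tail_sum d k) \<longlonglongrightarrow> \<Lambda>"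
    using scaled_tail_sum_limit[OF assms(1,2)] by blast
  have d_lt_1: "d < 1" using assms(2) by simp
  have "(\<lambda>k::nat. (\<integral>\<omega>. (X (int k + 1) \<omega> - fi_pred d X k \<omega>)\<^sup>2 \<partial>M) - s2 - s2 * \<Lambda> / real k)
          \<in> o(\<lambda>k. 1 / real k)" if N: "fi_noise M d s2 eps X" for M :: "'a measure" and eps X
  proof (rule smallo_of_scaled_limit)
    have scaled: "real k * ((\<integral>\<omega>. (X (int k + 1) \<omega> - fi_pred d X k \<omega>)\<^sup>2 \<partial>M) - s2)
        = s2 * (real k * (poch_frac (1 - d) k)\<^sup>2 * tail_sum d k)" for k
      unfolding prediction_error_formula[OF assms(1) d_lt_1 assms(3) N] by (simp add: algebra_simps)
    show "(\<lambda>k. real k * ((\<integral>\<omega>. (X (int k + 1) \<omega> - fi_pred d X k \<omega>)\<^sup>2 \<partial>M) - s2)) \<longlonglongrightarrow> s2 * \<Lambda>"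
      unfolding scaled by (rule tendsto_mult_left[OF lim])
  qed
  then show ?thesis
    using assms(3) \<Lambda> by (intro exI[of _ "s2 * \<Lambda>"]) simp
qed

end
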